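(* Let $L>0$, $\bar\alpha\in(0,1)$ and $\rho$ satisfy $-\tfrac{1}{2L}<\rho$ and $-\rho L\ge\frac{1-\bar\alpha}{2}$. Then for every $n\ge2$ there exists an $L$-Lipschitz operator $F:\mathbb R^n\to\mathbb R^n$ with a zero $z^\star$ such that $\langle Fz,z-z^\star\rangle\ge\rho\|Fz\|^2$ for all $z\in\mathbb R^n$, and an initial point $z^0$, such that the sequence generated by $$\bar z^k=z^k-\tfrac1L Fz^k,\qquad z^{k+1}=z^k-\tfrac{\bar\alpha}{L}F\bar z^k$$ does not converge. *)

theory Defs
  imports "HOL-Analysis.Analysis"
begin

primrec eg_seq :: "real \<Rightarrow> real \<Rightarrow> ('a::real_vector \<Rightarrow> 'a) \<Rightarrow> 'a \<Rightarrow> nat \<Rightarrow> 'a" where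
  "eg_seq L a F z0 0 = z0"
| "eg_seq L a F z0 (Suc k) =
     (let z = eg_seq L a F z0 k; zb = z - (1 / L) *\<^sub>R F z in z - (a / L) *\<^sub>R F zb)"

end

theory Submission
  imports Defs
begin

text \<open>Embed the complex plane into two coordinates i, j of \<open>\<real>\<^sup>n\<close> and let F act there as
  multiplication by \<open>L a\<close>, where a is the unit complex number with real part \<open>\<rho> L\<close>.
  Then \<open>\<langle>F z, z\<rangle> = \<rho> \<parallel>F z\<parallel>\<^sup>2\<close> holds with equality, and on the plane one extragradient step is
  multiplication by \<open>m = 1 - \<alpha> a + \<alpha> a\<^sup>2\<close>. A computation gives
  \<open>|m|\<^sup>2 = 1 + 2\<alpha>(1 - Re a)(\<alpha> - 1 - 2 Re a)\<close>, which is at least 1 exactly when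
  \<open>-\<rho> L \<ge> (1 - \<alpha>)/2\<close>; as \<open>m \<noteq> 1\<close>, the steps \<open>m\<^sup>k (m - 1)\<close> of the iteration started at
  the embedded 1 do not tend to 0.\<close>

definition eg_multiplier :: "real \<Rightarrow> complex \<Rightarrow> complex" where
  "eg_multiplier \<alpha> a = 1 - of_real \<alpha> * a + of_real \<alpha> * a\<^sup>2"

lemma cmod_eg_multiplier_sq:
  assumes "cmod a = 1"
  shows "(cmod (eg_multiplier \<alpha> a))\<^sup>2 = 1 + 2 * \<alpha> * (1 - Re a) * (\<alpha> - 1 - 2 * Re a)"
proof -
  have unit: "(Im a)\<^sup>2 = 1 - (Re a)\<^sup>2"
    using cmod_power2[of a] assms by simp
  have "Re (eg_multiplier \<alpha> a) = 1 - \<alpha> * Re a + \<alpha> * (2 * (Re a)\<^sup>2 - 1)"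
    by (simp add: eg_multiplier_def power2_eq_square unit[unfolded power2_eq_square] algebra_simps)
  moreover have "Im (eg_multiplier \<alpha> a) = \<alpha> * Im a * (2 * Re a - 1)"
    by (simp add: eg_multiplier_def power2_eq_square algebra_simps)
  ultimately have "(cmod (eg_multiplier \<alpha> a))\<^sup>2
      = (1 - \<alpha> * Re a + \<alpha> * (2 * (Re a)\<^sup>2 - 1))\<^sup>2 + \<alpha>\<^sup>2 * (1 - (Re a)\<^sup>2) * (2 * Re a - 1)\<^sup>2"
    by (simp add: cmod_power2 power_mult_distrib unit)
  then show ?thesis
    by (simp add: algebra_simps power2_eq_square)
qed

lemma one_le_cmod_eg_multiplier:
  assumes "cmod a = 1" "0 \<le> \<alpha>" "Re a \<le> - (1 - \<alpha>) / 2"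
  shows "1 \<le> cmod (eg_multiplier \<alpha> a)"
proof -
  have "Re a \<le> 1" using assms(1) abs_Re_le_cmod[of a] by simp
  then have "0 \<le> 2 * \<alpha> * (1 - Re a) * (\<alpha> - 1 - 2 * Re a)"
    using assms(2,3) by (intro mult_nonneg_nonneg) auto
  then have "1\<^sup>2 \<le> (cmod (eg_multiplier \<alpha> a))\<^sup>2"
    by (simp add: cmod_eg_multiplier_sq[OF assms(1)])
  then show ?thesis by (rule power2_le_imp_le) simp
qed

lemma eg_multiplier_ne_1:
  assumes "\<alpha> \<noteq> 0" "a \<noteq> 0" "a \<noteq> 1"
  shows "eg_multiplier \<alpha> a \<noteq> 1"
proof -
  have "eg_multiplier \<alpha> a - 1 = of_real \<alpha> * a * (a - 1)"
    by (simp add: eg_multiplier_def algebra_simps power2_eq_square)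
  then show ?thesis using assms by auto
qed

definition complex_to_vec :: "'n::finite \<Rightarrow> 'n \<Rightarrow> complex \<Rightarrow> real^'n" where
  "complex_to_vec i j w = (\<chi> k. if k = i then Re w else if k = j then Im w else 0)"

definition vec_to_complex :: "'n::finite \<Rightarrow> 'n \<Rightarrow> real^'n \<Rightarrow> complex" where
  "vec_to_complex i j z = Complex (z $ i) (z $ j)"

lemma vec_to_complex_complex_to_vec [simp]:
  "i \<noteq> j \<Longrightarrow> vec_to_complex i j (complex_to_vec i j w) = w"
  by (simp add: vec_to_complex_def complex_to_vec_def complex_eq_iff)

lemma complex_to_vec_diff: "complex_to_vec i j (v - w) = complex_to_vec i j v - complex_to_vec i j w"
  by (simp add: complex_to_vec_def vec_eq_iff)

lemma scaleR_complex_to_vec: "r *\<^sub>R complex_to_vec i j w = complex_to_vec i j (of_real r * w)"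
  by (simp add: complex_to_vec_def vec_eq_iff)

lemma vec_to_complex_diff: "vec_to_complex i j (x - y) = vec_to_complex i j x - vec_to_complex i j y"
  by (simp add: vec_to_complex_def complex_eq_iff)

lemma vec_to_complex_zero [simp]: "vec_to_complex i j 0 = 0"
  by (simp add: vec_to_complex_def complex_eq_iff)

lemma complex_to_vec_zero [simp]: "complex_to_vec i j 0 = 0"
  by (simp add: complex_to_vec_def vec_eq_iff)

lemma inner_complex_to_vec:
  assumes "i \<noteq> j"
  shows "inner (complex_to_vec i j w) z = Re w * z $ i + Im w * z $ j"
proof -
  have "inner (complex_to_vec i j w) z
      = (\<Sum>k\<in>UNIV. (if k = i then Re w * z $ i else 0) + (if k = j then Im w * z $ j else 0))"
    unfolding inner_vec_def using assms by (intro sum.cong) (auto simp: complex_to_vec_def)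
  then show ?thesis by (simp add: sum.distrib)
qed

lemma norm_complex_to_vec:
  assumes "i \<noteq> j"
  shows "norm (complex_to_vec i j w) = cmod w"
proof -
  have "inner (complex_to_vec i j w) (complex_to_vec i j w) = (Re w)\<^sup>2 + (Im w)\<^sup>2"
    unfolding inner_complex_to_vec[OF assms] using assms
    by (simp add: complex_to_vec_def power2_eq_square)
  then show ?thesis
    using norm_eq_sqrt_inner[of "complex_to_vec i j w"] by (simp only: cmod_def)
qed

lemma cmod_vec_to_complex_le:
  assumes "i \<noteq> j"
  shows "cmod (vec_to_complex i j z) \<le> norm z"
proof -
  have "(cmod (vec_to_complex i j z))\<^sup>2 = (\<Sum>k\<in>{i, j}. (z $ k)\<^sup>2)"
    using assms by (simp add: vec_to_complex_def cmod_power2)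
  also have "\<dots> \<le> (\<Sum>k\<in>UNIV. (z $ k)\<^sup>2)"
    by (rule sum_mono2) auto
  also have "\<dots> = (norm z)\<^sup>2"
    unfolding power2_norm_eq_inner inner_vec_def by (simp add: power2_eq_square)
  finally show ?thesis by (rule power2_le_imp_le) simp
qed

lemma inner_complex_to_vec_mult:
  assumes "i \<noteq> j"
  shows "inner (complex_to_vec i j (a * vec_to_complex i j z)) z = Re a * (cmod (vec_to_complex i j z))\<^sup>2"
  using assms
  by (simp add: inner_complex_to_vec vec_to_complex_def cmod_def algebra_simps power2_eq_square)

definition plane_op :: "real \<Rightarrow> complex \<Rightarrow> 'n::finite \<Rightarrow> 'n \<Rightarrow> real^'n \<Rightarrow> real^'n" where
  "plane_op L a i j z = L *\<^sub>R complex_to_vec i j (a * vec_to_complex i j z)"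

lemma plane_op_zero: "plane_op L a i j 0 = 0"
  by (simp add: plane_op_def)

lemma lipschitz_on_plane_op:
  fixes i j :: "'n::finite"
  assumes "i \<noteq> j" "L \<ge> 0" "cmod a = 1"
  shows "L-lipschitz_on S (plane_op L a i j)"
proof (rule lipschitz_onI)
  fix x y :: "real^'n"
  have "plane_op L a i j x - plane_op L a i j y = L *\<^sub>R complex_to_vec i j (a * vec_to_complex i j (x - y))"
    by (simp add: plane_op_def vec_to_complex_diff complex_to_vec_diff scaleR_complex_to_vec algebra_simps)
  then have "dist (plane_op L a i j x) (plane_op L a i j y) = L * cmod (vec_to_complex i j (x - y))"
    using assms by (simp add: dist_norm norm_complex_to_vec norm_mult)
  also have "\<dots> \<le> L * dist x y"
    using assms cmod_vec_to_complex_le[of i j "x - y"] by (simp add: dist_norm mult_left_mono)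
  finally show "dist (plane_op L a i j x) (plane_op L a i j y) \<le> L * dist x y" .
qed (use assms in simp)

lemma inner_plane_op:
  assumes "i \<noteq> j" "L > 0" "cmod a = 1"
  shows "inner (plane_op L a i j z) z = Re a / L * (norm (plane_op L a i j z))\<^sup>2"
proof -
  have "(norm (plane_op L a i j z))\<^sup>2 = L\<^sup>2 * (cmod (vec_to_complex i j z))\<^sup>2"
    using assms by (simp add: plane_op_def norm_complex_to_vec norm_mult power_mult_distrib)
  then show ?thesis
    using assms by (simp add: plane_op_def inner_complex_to_vec_mult power2_eq_square)
qed

lemma eg_seq_plane_op:
  assumes "i \<noteq> j" "L \<noteq> 0"
  shows "eg_seq L \<alpha> (plane_op L a i j) (complex_to_vec i j w) k
       = complex_to_vec i j (eg_multiplier \<alpha> a ^ k * w)"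
proof (induction k)
  case (Suc k)
  define u where "u = eg_multiplier \<alpha> a ^ k * w"
  have "complex_to_vec i j u - (1 / L) *\<^sub>R plane_op L a i j (complex_to_vec i j u)
      = complex_to_vec i j (u - a * u)"
    using assms by (simp add: plane_op_def complex_to_vec_diff scaleR_complex_to_vec)
  moreover have "complex_to_vec i j u - (\<alpha> / L) *\<^sub>R plane_op L a i j (complex_to_vec i j (u - a * u))
      = complex_to_vec i j (u - of_real \<alpha> * (a * (u - a * u)))"
    using assms
    by (simp add: plane_op_def complex_to_vec_diff vec_to_complex_diff scaleR_complex_to_vec)
  moreover have "u - of_real \<alpha> * (a * (u - a * u)) = eg_multiplier \<alpha> a ^ Suc k * w"
    by (simp add: u_def eg_multiplier_def algebra_simps power2_eq_square)
  ultimately show ?case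
    using Suc by (simp add: Let_def u_def)
qed simp

lemma not_convergent_if_steps_ge:
  fixes X :: "nat \<Rightarrow> 'a::metric_space"
  assumes "d > 0" "\<And>k. d \<le> dist (X (Suc k)) (X k)"
  shows "\<not> convergent X"
proof
  assume "convergent X"
  then obtain N where "\<forall>m\<ge>N. \<forall>n\<ge>N. dist (X m) (X n) < d"
    using metric_CauchyD[OF convergent_Cauchy assms(1)] by blast
  then have "dist (X (Suc N)) (X N) < d" by simp
  with assms(2)[of N] show False by simp
qed

lemma eg_seq_plane_op_not_convergent:
  assumes "i \<noteq> j" "L \<noteq> 0" "1 \<le> cmod (eg_multiplier \<alpha> a)" "eg_multiplier \<alpha> a \<noteq> 1"
  shows "\<not> convergent (eg_seq L \<alpha> (plane_op L a i j) (complex_to_vec i j 1))"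
proof (rule not_convergent_if_steps_ge)
  let ?m = "eg_multiplier \<alpha> a"
  show "0 < cmod (?m - 1)" using assms(4) by simp
  fix k
  let ?X = "eg_seq L \<alpha> (plane_op L a i j) (complex_to_vec i j 1)"
  have "cmod (?m - 1) \<le> cmod (?m ^ k * (?m - 1))"
    using assms(3) by (simp add: norm_mult norm_power mult_le_cancel_right1 one_le_power)
  also have "?m ^ k * (?m - 1) = ?m ^ Suc k * 1 - ?m ^ k * 1"
    by (simp add: algebra_simps)
  also have "cmod (?m ^ Suc k * 1 - ?m ^ k * 1) = dist (?X (Suc k)) (?X k)"
    unfolding eg_seq_plane_op[OF assms(1,2)] dist_norm complex_to_vec_diff[symmetric]
    by (rule norm_complex_to_vec[OF assms(1), symmetric])
  finally show "cmod (?m - 1) \<le> dist (?X (Suc k)) (?X k)" .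
qed

theorem theorem3p3:
  fixes L \<alpha> \<rho> :: real
  assumes "L > 0" and "0 < \<alpha>" and "\<alpha> < 1"
    and "- 1 / (2 * L) < \<rho>" and "- \<rho> * L \<ge> (1 - \<alpha>) / 2"
    and "CARD('n::finite) \<ge> 2"
  shows "\<exists>(F :: real^'n \<Rightarrow> real^'n) zs z0.
           L-lipschitz_on UNIV F \<and> F zs = 0 \<and>
           (\<forall>z. inner (F z) (z - zs) \<ge> \<rho> * (norm (F z))\<^sup>2) \<and>
           \<not> convergent (eg_seq L \<alpha> F z0)"
proof -
  obtain i j :: 'n where ij: "i \<noteq> j"
    using assms(6) by (metis card_2_iff' ex_card)
  define p where "p = \<rho> * L"
  have p: "- 1 / 2 < p" "p \<le> - (1 - \<alpha>) / 2" "p < 0"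
    using assms(1,3-5) by (auto simp: p_def field_simps)
  define a where "a = Complex p (sqrt (1 - p\<^sup>2))"
  have a: "cmod a = 1" "Re a = p" "a \<noteq> 1"
    using p by (auto simp: a_def cmod_def abs_square_le_1 complex_eq_iff)
  define F where "F = plane_op L a i j"
  have "L-lipschitz_on UNIV F" "F 0 = 0"
    using ij assms(1) a by (simp_all add: F_def lipschitz_on_plane_op plane_op_zero)
  moreover have "\<rho> * (norm (F z))\<^sup>2 \<le> inner (F z) (z - 0)" for z
    using inner_plane_op[OF ij assms(1) a(1)] assms(1) by (simp add: F_def a p_def)
  moreover have "\<not> convergent (eg_seq L \<alpha> F (complex_to_vec i j 1))"
    unfolding F_def using ij assms(1,2) a p
    by (intro eg_seq_plane_op_not_convergent one_le_cmod_eg_multiplier eg_multiplier_ne_1) auto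
  ultimately show ?thesis by blast
qed

end
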